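(* Consider the GSEM described in the context in the "CCC" case: conditional on $\mathbf W=\mathbf w$, $X\sim N(\mu_x,\sigma_x^2)$ with $\mu_x=\mathbf w_1^\top\boldsymbol\beta_x$, $M\sim N(\mu_m,\sigma_m^2)$ with $\mu_m=\mathbf w^\top\boldsymbol\beta_m$, and $Y\sim N(\mu_y,\sigma_y^2)$ with $\mu_y=\mathbf w^\top\boldsymbol\beta_y$, where $\sigma_x,\sigma_m,\sigma_y>0$ (so $X=\mu_x+\sigma_x Z_x$, $M=\mu_m+\sigma_m Z_m^*$, $Y=\mu_y+\sigma_y Z_y^*$). Then for any $x_0,x_1$, $$\mathrm{NDE}(x_0,x_1;\mathbf w)=\frac{\sigma_y\,\gamma\,(z_{x_1}-z_{x_0})}{\tau_y},\qquad \mathrm{NIE}(x_0,x_1;\mathbf w)=\frac{\sigma_y\,\alpha\beta\,(z_{x_1}-z_{x_0})}{\tau_y},$$ where $z_x=(x-\mathbf w_1^\top\boldsymbol\beta_x)/\sigma_x$ and $\tau_y=\sqrt{(\gamma+\alpha\beta)^2+\beta^2+1}$. Consequently, for $x_0\neq x_1$: $\mathrm{NDE}(x_0,x_1;\mathbf w)=0$ if and only if $\gamma=0$, and $\mathrm{NIE}(x_0,x_1;\mathbf w)=0$ if and only if $\alpha=0$ or $\beta=0$.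
   Context: Generalized structural equation model (GSEM). Let $X$ (exposure), $M$ (mediator), $Y$ (outcome) be scalar random variables and $\mathbf W=(\mathbf W_1^\top,\mathbf W_2^\top)^\top$ a vector of confounders (first entry $1$), with $\mathbf w=(\mathbf w_1^\top,\mathbf w_2^\top)^\top$ a fixed value. Fix real parameters $\alpha,\beta,\gamma$ and let $(Z_x,Z_m,Z_y)$ be latent variables with $Z_x\sim N(0,1)$, $Z_m=\alpha Z_x+\epsilon_m$, $Z_y=\gamma Z_x+\beta Z_m+\epsilon_y$, where $Z_x,\epsilon_m,\epsilon_y$ are independent $N(0,1)$ (independent of $\mathbf W$). Put $\tau_m=\sqrt{\alpha^2+1}$, $\tau_y=\sqrt{(\gamma+\alpha\beta)^2+\beta^2+1}$, $Z_m^*=Z_m/\tau_m$, $Z_y^*=Z_y/\tau_y$ (each standard normal). Conditional on $\mathbf W=\mathbf w$, with marginal CDFs $F_x(\cdot\mid\mathbf w),F_m(\cdot\mid\mathbf w),F_y(\cdot\mid\mathbf w)$ given by generalized linear models, the observed variables are $X=F_x^{-1}(\Phi(Z_x))$, $M=F_m^{-1}(\Phi(Z_m^* ))$, $Y=F_y^{-1}(\Phi(Z_y^* ))$, where $\Phi,\phi$ denote the standard normal CDF and density and $F^{-1}$ is the generalized inverse (quantile function). Counterfactual mean: $\mathrm E\{Y(x_a,M(x_b))\mid\mathbf W=\mathbf w\}:=\mathrm E_M\{\mathrm E(Y\mid M,X=x_a,\mathbf W=\mathbf w)\mid X=x_b,\mathbf W=\mathbf w\}$. Conditional natural direct and indirect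 effects for a change of $X$ from $x_0$ to $x_1$: $\mathrm{NDE}(x_0,x_1;\mathbf w)=\mathrm E\{Y(x_1,M(x_0))\mid\mathbf w\}-\mathrm E\{Y(x_0,M(x_0))\mid\mathbf w\}$ and $\mathrm{NIE}(x_0,x_1;\mathbf w)=\mathrm E\{Y(x_1,M(x_1))\mid\mathbf w\}-\mathrm E\{Y(x_1,M(x_0))\mid\mathbf w\}$. *)

theory Defs
  imports "HOL-Probability.Probability"
begin

definition phi :: "real \<Rightarrow> real" where
  "phi z = normal_density 0 1 z"

definition tau_m :: "real \<Rightarrow> real" where
  "tau_m \<alpha> = sqrt (\<alpha>\<^sup>2 + 1)"

definition tau_y :: "real \<Rightarrow> real \<Rightarrow> real \<Rightarrow> real" where
  "tau_y \<alpha> \<beta> \<gamma> = sqrt ((\<gamma> + \<alpha> * \<beta>)\<^sup>2 + \<beta>\<^sup>2 + 1)"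

(* Joint density of the latent vector (Z_x, Z_m, Z_y) of the structural model
   Z_x ~ N(0,1), Z_m = alpha Z_x + eps_m, Z_y = gamma Z_x + beta Z_m + eps_y,
   with Z_x, eps_m, eps_y independent N(0,1). *)
definition latent_density :: "real \<Rightarrow> real \<Rightarrow> real \<Rightarrow> real \<Rightarrow> real \<Rightarrow> real \<Rightarrow> real" where
  "latent_density \<alpha> \<beta> \<gamma> zx zm zy =
     phi zx * phi (zm - \<alpha> * zx) * phi (zy - \<gamma> * zx - \<beta> * zm)"

(* CCC case, conditional on W = w: X = mu_x + sigma_x Z_x, M = mu_m + sigma_m Z_m / tau_m,
   Y = mu_y + sigma_y Z_y / tau_y.  Joint (conditional on W = w) density of (X, M, Y),
   obtained from the latent density by the linear change of variables. *)
definition ccc_density ::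
  "real \<Rightarrow> real \<Rightarrow> real \<Rightarrow> real \<Rightarrow> real \<Rightarrow> real \<Rightarrow> real \<Rightarrow> real \<Rightarrow> real
   \<Rightarrow> real \<Rightarrow> real \<Rightarrow> real \<Rightarrow> real" where
  "ccc_density \<alpha> \<beta> \<gamma> \<mu>x \<sigma>x \<mu>m \<sigma>m \<mu>y \<sigma>y x m y =
     latent_density \<alpha> \<beta> \<gamma> ((x - \<mu>x) / \<sigma>x)
        (tau_m \<alpha> * (m - \<mu>m) / \<sigma>m) (tau_y \<alpha> \<beta> \<gamma> * (y - \<mu>y) / \<sigma>y)
     * (tau_m \<alpha> * tau_y \<alpha> \<beta> \<gamma> / (\<sigma>x * \<sigma>m * \<sigma>y))"

definition dens_XM :: "(real \<Rightarrow> real \<Rightarrow> real \<Rightarrow> real) \<Rightarrow> real \<Rightarrow> real \<Rightarrow> real" where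
  "dens_XM f x m = (\<integral>y. f x m y \<partial>lborel)"

definition dens_X :: "(real \<Rightarrow> real \<Rightarrow> real \<Rightarrow> real) \<Rightarrow> real \<Rightarrow> real" where
  "dens_X f x = (\<integral>m. dens_XM f x m \<partial>lborel)"

definition cond_mean_Y :: "(real \<Rightarrow> real \<Rightarrow> real \<Rightarrow> real) \<Rightarrow> real \<Rightarrow> real \<Rightarrow> real" where
  "cond_mean_Y f x m = (\<integral>y. y * f x m y \<partial>lborel) / dens_XM f x m"

(* E{Y(x_a, M(x_b))} = E_M { E(Y | M, X = x_a) | X = x_b } *)
definition cf_mean :: "(real \<Rightarrow> real \<Rightarrow> real \<Rightarrow> real) \<Rightarrow> real \<Rightarrow> real \<Rightarrow> real" where
  "cf_mean f xa xb = (\<integral>m. cond_mean_Y f xa m * dens_XM f xb m \<partial>lborel) / dens_X f xb"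

definition NDE :: "(real \<Rightarrow> real \<Rightarrow> real \<Rightarrow> real) \<Rightarrow> real \<Rightarrow> real \<Rightarrow> real" where
  "NDE f x0 x1 = cf_mean f x1 x0 - cf_mean f x0 x0"

definition NIE :: "(real \<Rightarrow> real \<Rightarrow> real \<Rightarrow> real) \<Rightarrow> real \<Rightarrow> real \<Rightarrow> real" where
  "NIE f x0 x1 = cf_mean f x1 x1 - cf_mean f x1 x0"

end

theory Submission
  imports Defs
begin

text \<open>Conditionally on \<open>(X, M)\<close>, the outcome \<open>Y\<close> of the CCC model is normal with a mean that is
  affine in \<open>(X, M)\<close>, and conditionally on \<open>X\<close> the mediator \<open>M\<close> is normal with a mean affine in \<open>X\<close>.
  Hence \<open>E(Y | M, X = x\<^sub>a)\<close> is affine in \<open>M\<close>, and averaging it over \<open>M | X = x\<^sub>b\<close> only replaces \<open>M\<close>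
  by its conditional mean. In standardized units this gives
  \<open>E{Y(x\<^sub>a, M(x\<^sub>b))} = \<mu>\<^sub>y + \<sigma>\<^sub>y (\<gamma> z\<^sub>x\<^sub>a + \<alpha>\<beta> z\<^sub>x\<^sub>b) / \<tau>\<^sub>y\<close>,
  from which both effects are read off as differences.\<close>

lemma phi_pos: "phi x > 0"
  unfolding phi_def by (rule normal_density_pos) simp

lemma tau_m_pos: "tau_m \<alpha> > 0"
  unfolding tau_m_def by (simp add: add_nonneg_pos)

lemma tau_y_pos: "tau_y \<alpha> \<beta> \<gamma> > 0"
  unfolding tau_y_def by (simp add: add_nonneg_pos)

lemma phi_affine:
  assumes "a > (0::real)"
  shows "phi (a * y - c) = normal_density (c / a) (1 / a) y / a"
proof -
  have "(y - c / a)\<^sup>2 / (2 * (1 / a)\<^sup>2) = (a * y - c)\<^sup>2 / 2"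
    using assms by (simp add: field_simps power2_eq_square)
  moreover have "sqrt (2 * pi * (1 / a)\<^sup>2) = sqrt (2 * pi) / a"
    using assms by (simp add: real_sqrt_mult real_sqrt_divide)
  ultimately show ?thesis
    using assms unfolding phi_def normal_density_def by (simp add: field_simps)
qed

lemma has_bochner_integral_affine_times_phi_affine:
  assumes "a > (0::real)"
  shows "has_bochner_integral lborel (\<lambda>y. (A + B * y) * phi (a * y - c)) ((A + B * (c / a)) / a)"
proof -
  let ?N = "normal_density (c / a) (1 / a)"
  have "0 < 1 / a" using assms by simp
  then have "has_bochner_integral lborel ?N 1"
    and "has_bochner_integral lborel (\<lambda>y. ?N y * y) (c / a)"
    by (simp_all add: has_bochner_integral_iff integrable_normal_density
        integral_normal_density normal_moment_nz_1[THEN has_bochner_integral_iff[THEN iffD1]])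
  then have "has_bochner_integral lborel (\<lambda>y. A / a * ?N y + B / a * (?N y * y))
      (A / a * 1 + B / a * (c / a))"
    by (intro has_bochner_integral_add has_bochner_integral_mult_right)
  moreover have "(\<lambda>y. A / a * ?N y + B / a * (?N y * y)) = (\<lambda>y. (A + B * y) * phi (a * y - c))"
    unfolding phi_affine[OF assms] using assms by (simp add: field_simps)
  ultimately show ?thesis
    by (simp add: add_divide_distrib)
qed

lemma integral_affine_times_phi_affine:
  assumes "a > (0::real)"
  shows "(\<integral>y. g * ((A + B * y) * phi (a * y - c)) \<partial>lborel) = g * ((A + B * (c / a)) / a)"
  using has_bochner_integral_integral_eq[OF has_bochner_integral_affine_times_phi_affine[OF assms]]
  by simp

lemma dens_XM_normal_in_y:
  assumes "a > 0" and "\<And>y. f x m y = g * phi (a * y - c)"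
  shows "dens_XM f x m = g / a"
  using integral_affine_times_phi_affine[OF assms(1), of g 1 0 c]
  unfolding dens_XM_def assms(2) by simp

lemma cond_mean_Y_normal_in_y:
  assumes "a > 0" and "\<And>y. f x m y = g * phi (a * y - c)" and "g \<noteq> 0"
  shows "cond_mean_Y f x m = c / a"
proof -
  have "(\<integral>y. y * f x m y \<partial>lborel) = g * ((0 + 1 * (c / a)) / a)"
    unfolding assms(2) using integral_affine_times_phi_affine[OF assms(1), of g 0 1 c]
    by (simp add: ac_simps)
  moreover have "dens_XM f x m = g / a"
    using assms(1,2) by (rule dens_XM_normal_in_y)
  ultimately show ?thesis
    unfolding cond_mean_Y_def using assms(1,3) by simp
qed

lemma cf_mean_affine_regression:
  assumes "a > 0" and "h \<noteq> 0"
    and "\<And>m. dens_XM f xb m = h * phi (a * m - c)"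
    and "\<And>m. cond_mean_Y f xa m = A + B * m"
  shows "cf_mean f xa xb = A + B * (c / a)"
proof -
  have "(\<integral>m. cond_mean_Y f xa m * dens_XM f xb m \<partial>lborel) = h * ((A + B * (c / a)) / a)"
    unfolding assms(3,4) using integral_affine_times_phi_affine[OF assms(1), of h A B c]
    by (simp add: ac_simps)
  moreover have "dens_X f xb = h * ((1 + 0 * (c / a)) / a)"
    unfolding dens_X_def assms(3) using integral_affine_times_phi_affine[OF assms(1), of h 1 0 c]
    by simp
  ultimately show ?thesis
    unfolding cf_mean_def using assms(1,2) by simp
qed

lemma cf_mean_ccc_density:
  fixes \<sigma>x \<sigma>m \<sigma>y :: real
  assumes "\<sigma>x > 0" and "\<sigma>m > 0" and "\<sigma>y > 0"
  shows "cf_mean (ccc_density \<alpha> \<beta> \<gamma> \<mu>x \<sigma>x \<mu>m \<sigma>m \<mu>y \<sigma>y) xa xb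
     = \<mu>y + \<sigma>y / tau_y \<alpha> \<beta> \<gamma> * (\<gamma> * ((xa - \<mu>x) / \<sigma>x) + \<alpha> * \<beta> * ((xb - \<mu>x) / \<sigma>x))"
proof -
  define f where "f = ccc_density \<alpha> \<beta> \<gamma> \<mu>x \<sigma>x \<mu>m \<sigma>m \<mu>y \<sigma>y"
  define tm where "tm = tau_m \<alpha>"
  define ty where "ty = tau_y \<alpha> \<beta> \<gamma>"
  define z where "z x = (x - \<mu>x) / \<sigma>x" for x
  define K where "K = tm * ty / (\<sigma>x * \<sigma>m * \<sigma>y)"
  define g where "g = (\<lambda>x m. K * phi (z x) * phi (tm / \<sigma>m * m - (tm * \<mu>m / \<sigma>m + \<alpha> * z x)))"
  define c where "c = (\<lambda>x m. ty * \<mu>y / \<sigma>y + \<gamma> * z x + \<beta> * (tm * (m - \<mu>m) / \<sigma>m))"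
  have tm: "tm > 0" and ty: "ty > 0"
    unfolding tm_def ty_def by (simp_all add: tau_m_pos tau_y_pos)
  have g: "g x m > 0" for x m
    unfolding g_def K_def using assms tm ty by (simp add: phi_pos)
  \<comment> \<open>\<open>g x\<close> is, up to a constant, the normal density of \<open>M | X = x\<close>; \<open>c x m / (ty / \<sigma>y)\<close> is \<open>E(Y | X = x, M = m)\<close>.\<close>
  have f_eq: "f x m y = g x m * phi (ty / \<sigma>y * y - c x m)" for x m y
  proof -
    have eq_m: "tm * (m - \<mu>m) / \<sigma>m - \<alpha> * z x = tm / \<sigma>m * m - (tm * \<mu>m / \<sigma>m + \<alpha> * z x)"
      and eq_y: "ty * (y - \<mu>y) / \<sigma>y - \<gamma> * z x - \<beta> * (tm * (m - \<mu>m) / \<sigma>m) = ty / \<sigma>y * y - c x m"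
      unfolding c_def using assms by (simp_all add: field_simps)
    show ?thesis
      unfolding f_def ccc_density_def latent_density_def
        tm_def[symmetric] ty_def[symmetric] z_def[symmetric] eq_m eq_y g_def K_def
      by (simp add: ac_simps)
  qed
  have "0 < ty / \<sigma>y" using ty assms by simp
  note dens = dens_XM_normal_in_y[OF this f_eq] and regr = cond_mean_Y_normal_in_y[OF this f_eq]
  have "cf_mean f xa xb
      = (ty * \<mu>y / \<sigma>y + \<gamma> * z xa - \<beta> * tm * \<mu>m / \<sigma>m) / (ty / \<sigma>y)
        + \<beta> * tm / \<sigma>m / (ty / \<sigma>y) * ((tm * \<mu>m / \<sigma>m + \<alpha> * z xb) / (tm / \<sigma>m))"
  proof (rule cf_mean_affine_regression)
    show "dens_XM f xb m = K * phi (z xb) / (ty / \<sigma>y) * phi (tm / \<sigma>m * m - (tm * \<mu>m / \<sigma>m + \<alpha> * z xb))"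
      for m
      unfolding dens g_def by simp
    show "cond_mean_Y f xa m = (ty * \<mu>y / \<sigma>y + \<gamma> * z xa - \<beta> * tm * \<mu>m / \<sigma>m) / (ty / \<sigma>y)
        + \<beta> * tm / \<sigma>m / (ty / \<sigma>y) * m" for m
      unfolding regr[OF g[THEN less_imp_neq, symmetric]] c_def using assms ty
      by (simp add: field_simps)
  qed (use tm ty assms in \<open>simp_all add: K_def phi_pos[THEN less_imp_neq, symmetric]\<close>)
  also have "\<dots> = \<mu>y + \<sigma>y / ty * (\<gamma> * z xa + \<alpha> * \<beta> * z xb)"
    using tm ty assms by (simp add: field_simps)
  finally show ?thesis
    unfolding f_def ty_def z_def .
qed

theorem proposition1:
  fixes \<alpha> \<beta> \<gamma> \<sigma>x \<sigma>m \<sigma>y x0 x1 :: real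
    and w1 \<beta>x \<beta>m1 \<beta>y1 :: "real ^ 'p"
    and w2 \<beta>m2 \<beta>y2 :: "real ^ 'q"
  assumes "\<sigma>x > 0" and "\<sigma>m > 0" and "\<sigma>y > 0"
  defines "\<mu>x \<equiv> w1 \<bullet> \<beta>x"
    and "\<mu>m \<equiv> w1 \<bullet> \<beta>m1 + w2 \<bullet> \<beta>m2"
    and "\<mu>y \<equiv> w1 \<bullet> \<beta>y1 + w2 \<bullet> \<beta>y2"
  defines "f \<equiv> ccc_density \<alpha> \<beta> \<gamma> \<mu>x \<sigma>x \<mu>m \<sigma>m \<mu>y \<sigma>y"
    and "z \<equiv> (\<lambda>x. (x - \<mu>x) / \<sigma>x)"
  shows "NDE f x0 x1 = \<sigma>y * \<gamma> * (z x1 - z x0) / tau_y \<alpha> \<beta> \<gamma>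
       \<and> NIE f x0 x1 = \<sigma>y * \<alpha> * \<beta> * (z x1 - z x0) / tau_y \<alpha> \<beta> \<gamma>
       \<and> (x0 \<noteq> x1 \<longrightarrow> (NDE f x0 x1 = 0 \<longleftrightarrow> \<gamma> = 0)
                      \<and> (NIE f x0 x1 = 0 \<longleftrightarrow> \<alpha> = 0 \<or> \<beta> = 0))"
proof -
  have ty: "tau_y \<alpha> \<beta> \<gamma> > 0" by (rule tau_y_pos)
  have cf: "cf_mean f xa xb = \<mu>y + \<sigma>y / tau_y \<alpha> \<beta> \<gamma> * (\<gamma> * z xa + \<alpha> * \<beta> * z xb)" for xa xb
    unfolding f_def z_def using cf_mean_ccc_density[OF assms(1-3)] .
  have nde: "NDE f x0 x1 = \<sigma>y * \<gamma> * (z x1 - z x0) / tau_y \<alpha> \<beta> \<gamma>"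
    and nie: "NIE f x0 x1 = \<sigma>y * \<alpha> * \<beta> * (z x1 - z x0) / tau_y \<alpha> \<beta> \<gamma>"
    unfolding NDE_def NIE_def cf using ty by (simp_all add: field_simps)
  have "x0 \<noteq> x1 \<Longrightarrow> z x1 - z x0 \<noteq> 0"
    unfolding z_def using assms(1) by (simp add: field_simps)
  then show ?thesis
    using nde nie ty assms(3) by auto
qed

end
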